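(* (1) For any finite alphabet $\Sigma$ and any $\lambda\in[0,1]$, there is a quantum automaton $\mathcal{A}$ over $\Sigma$ such that $f^{\mathrm{D}}_{\mathcal{A}}(w)=\lambda$ for all $w\in\Sigma^\omega$. (2) Let $\mathcal{A}$ and $\mathcal{B}$ be quantum automata over the same alphabet $\Sigma$ and $a,b\in\mathbb{C}$ with $|a|^2+|b|^2=1$. Then for every $w\in\Sigma^\omega$, $f^{\mathrm{D}}_{a\mathcal{A}\oplus b\mathcal{B}}(w)\ge\max\{|a|^2f^{\mathrm{D}}_{\mathcal{A}}(w),|b|^2f^{\mathrm{D}}_{\mathcal{B}}(w)\}$.
   Context: A quantum automaton is a tuple $\mathcal{A}=(\mathcal{H},|s_0\rangle,\Sigma,\{U_\sigma:\sigma\in\Sigma\},F)$ where $\mathcal{H}$ is a finite-dimensional complex Hilbert space, $|s_0\rangle$ a unit vector, $\Sigma$ a finite alphabet, each $U_\sigma$ unitary, and $F$ a subspace. For $w=\sigma_1\sigma_2\cdots\in\Sigma^\omega$, a unit vector $|\psi\rangle\in F$ and checkpoints $0\le n_1<n_2<\cdots$, the disturbing run is $|s_0\rangle$ (initial state) and for $n\ge1$: $|s_n\rangle=U_{\sigma_n}|\psi\rangle$ if $n-1=n_i$ for some $i$, else $|s_n\rangle=U_{\sigma_n}|s_{n-1}\rangle$; $f^{\mathrm{D}}_{\mathcal{A}}(w)=\sup_{|\psi\rangle}\sup_{\{n_i\}}\inf_{i\ge1}|\langle\psi|s_{n_i}\rangle|^2$ over unit $|\psi\rangle\in F$ and strictly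 increasing checkpoint sequences. The weighted direct sum of $\mathcal{A}=(\mathcal{H}^{\mathcal{A}},|s_0^{\mathcal{A}}\rangle,\Sigma,\{U^{\mathcal{A}}_\sigma\},F^{\mathcal{A}})$ and $\mathcal{B}=(\mathcal{H}^{\mathcal{B}},|s_0^{\mathcal{B}}\rangle,\Sigma,\{U^{\mathcal{B}}_\sigma\},F^{\mathcal{B}})$ is $a\mathcal{A}\oplus b\mathcal{B}=(\mathcal{H}^{\mathcal{A}}\oplus\mathcal{H}^{\mathcal{B}},a|s_0^{\mathcal{A}}\rangle\oplus b|s_0^{\mathcal{B}}\rangle,\Sigma,\{U^{\mathcal{A}}_\sigma\oplus U^{\mathcal{B}}_\sigma\},F^{\mathcal{A}}\oplus F^{\mathcal{B}})$. *)

theory Defs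
  imports "HOL-Analysis.Analysis" "Jordan_Normal_Form.Matrix"
begin

definition cinner :: "complex vec \<Rightarrow> complex vec \<Rightarrow> complex" where
  "cinner v w = (\<Sum>i<dim_vec v. cnj (v $ i) * w $ i)"

definition unit_vec_c :: "nat \<Rightarrow> complex vec \<Rightarrow> bool" where
  "unit_vec_c n v \<longleftrightarrow> v \<in> carrier_vec n \<and> (\<Sum>i<n. (cmod (v $ i))\<^sup>2) = 1"

definition adjoint_mat :: "complex mat \<Rightarrow> complex mat" where
  "adjoint_mat U = mat (dim_col U) (dim_row U) (\<lambda>(i,j). cnj (U $$ (j,i)))"

definition unitary_mat :: "nat \<Rightarrow> complex mat \<Rightarrow> bool" where
  "unitary_mat n U \<longleftrightarrow> U \<in> carrier_mat n n \<and> adjoint_mat U * U = 1\<^sub>m n \<and> U * adjoint_mat U = 1\<^sub>m n"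

definition csubspace_vec :: "nat \<Rightarrow> complex vec set \<Rightarrow> bool" where
  "csubspace_vec n F \<longleftrightarrow> F \<subseteq> carrier_vec n \<and> 0\<^sub>v n \<in> F \<and>
     (\<forall>u\<in>F. \<forall>v\<in>F. u + v \<in> F) \<and> (\<forall>c. \<forall>u\<in>F. c \<cdot>\<^sub>v u \<in> F)"

record 'a qaut =
  qa_dim :: nat
  qa_init :: "complex vec"
  qa_alph :: "'a set"
  qa_U :: "'a \<Rightarrow> complex mat"
  qa_F :: "complex vec set"

definition is_qaut :: "'a qaut \<Rightarrow> bool" where
  "is_qaut A \<longleftrightarrow> finite (qa_alph A) \<and> unit_vec_c (qa_dim A) (qa_init A) \<and>
     (\<forall>\<sigma>\<in>qa_alph A. unitary_mat (qa_dim A) (qa_U A \<sigma>)) \<and>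
     csubspace_vec (qa_dim A) (qa_F A)"

text \<open>Infinite words are sequences w :: nat => 'a, with w 0 = sigma_1.
  Disturbing run: drun A w psi ns n is |s_n>, checkpoints n_1 < n_2 < ... are ns 0 < ns 1 < ...\<close>

fun drun :: "'a qaut \<Rightarrow> (nat \<Rightarrow> 'a) \<Rightarrow> complex vec \<Rightarrow> (nat \<Rightarrow> nat) \<Rightarrow> nat \<Rightarrow> complex vec" where
  "drun A w \<psi> ns 0 = qa_init A"
| "drun A w \<psi> ns (Suc n) =
     qa_U A (w n) *\<^sub>v (if n \<in> range ns then \<psi> else drun A w \<psi> ns n)"

text \<open>Supremum over unit psi in F and strictly increasing checkpoints of the infimum of
  the overlaps; the empty supremum (F = {0}) is taken to be 0.\<close>

definition fD :: "'a qaut \<Rightarrow> (nat \<Rightarrow> 'a) \<Rightarrow> real" where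
  "fD A w = Sup (insert 0 {(INF i. (cmod (cinner \<psi> (drun A w \<psi> ns (ns i))))\<^sup>2) | \<psi> ns.
      \<psi> \<in> qa_F A \<and> unit_vec_c (qa_dim A) \<psi> \<and> strict_mono ns})"

definition wdsum :: "complex \<Rightarrow> 'a qaut \<Rightarrow> complex \<Rightarrow> 'a qaut \<Rightarrow> 'a qaut" where
  "wdsum a A b B = \<lparr> qa_dim = qa_dim A + qa_dim B,
     qa_init = (a \<cdot>\<^sub>v qa_init A) @\<^sub>v (b \<cdot>\<^sub>v qa_init B),
     qa_alph = qa_alph A,
     qa_U = (\<lambda>\<sigma>. four_block_mat (qa_U A \<sigma>) (0\<^sub>m (qa_dim A) (qa_dim B))
                                (0\<^sub>m (qa_dim B) (qa_dim A)) (qa_U B \<sigma>)),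
     qa_F = {u @\<^sub>v v | u v. u \<in> qa_F A \<and> v \<in> qa_F B} \<rparr>"

end

theory Submission
  imports Defs
begin

(* Part (1): on C^2 let every letter act as the identity, let F be spanned by e_0 and start in
   sqrt(lam) e_0 + sqrt(1 - lam) e_1. A disturbing run stays at the initial state up to the first
   checkpoint and sits at psi afterwards, so the overlaps are lam at the first checkpoint and 1 at
   every later one: their infimum is lam whatever psi and the checkpoints are.

   Part (2): pad a candidate psi of A with zeros. Up to the first checkpoint the run of
   aA (+) bB is the weighted pair of undisturbed runs, so its overlap with psi (+) 0 is |a|^2 times
   the overlap in A; afterwards it is the pair of disturbing runs with B restarted at 0, so the
   overlap equals the one in A. Every value of the supremum defining f_A, scaled by |a|^2, is
   therefore dominated by a value for the sum, and symmetrically for B. *)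

lemma scaled_Sup_insert_0_le:
  fixes c :: real
  assumes "0 \<le> c" "bdd_above Y" "\<And>x. x \<in> X \<Longrightarrow> \<exists>y\<in>Y. c * x \<le> y"
  shows "c * Sup (insert 0 X) \<le> Sup (insert 0 Y)"
proof (cases "c = 0")
  case True
  then show ?thesis using assms(2) by (simp add: cSup_upper)
next
  case False
  then have c: "c > 0" using assms(1) by simp
  have Y: "y \<le> Sup (insert 0 Y)" if "y \<in> insert 0 Y" for y
    using that assms(2) by (simp add: cSup_upper)
  have "Sup (insert 0 X) \<le> Sup (insert 0 Y) / c"
  proof (rule cSup_least)
    fix x assume "x \<in> insert 0 X"
    then obtain y where "y \<in> insert 0 Y" "c * x \<le> y"
      using assms(3) by force
    then show "x \<le> Sup (insert 0 Y) / c"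
      using Y c by (simp add: field_simps order_trans)
  qed simp
  then show ?thesis using c by (simp add: field_simps)
qed

definition sqnorm :: "complex vec \<Rightarrow> real" where
  "sqnorm v = (\<Sum>i<dim_vec v. (cmod (v $ i))\<^sup>2)"

lemma unit_vec_c_iff: "unit_vec_c n v \<longleftrightarrow> v \<in> carrier_vec n \<and> sqnorm v = 1"
  unfolding unit_vec_c_def sqnorm_def by auto

lemma sum_lessThan_add: "(\<Sum>i<m + (n::nat). f i) = (\<Sum>i<m. f i) + (\<Sum>i<n. f (m + i))"
  by (induction n) (auto simp: add.assoc)

lemma sqnorm_append: "sqnorm (u @\<^sub>v v) = sqnorm u + sqnorm v"
  unfolding sqnorm_def by (simp add: sum_lessThan_add)

lemma sqnorm_smult: "sqnorm (c \<cdot>\<^sub>v v) = (cmod c)\<^sup>2 * sqnorm v"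
  unfolding sqnorm_def by (simp add: sum_distrib_left norm_mult power_mult_distrib)

lemma sqnorm_zero [simp]: "sqnorm (0\<^sub>v n) = 0"
  unfolding sqnorm_def by simp

lemma cinner_self: "cinner v v = of_real (sqnorm v)"
  unfolding cinner_def sqnorm_def
  by (simp add: complex_norm_square[symmetric] of_real_sum of_real_power mult.commute)

lemma cinner_Cauchy_Schwarz:
  assumes "dim_vec u = dim_vec v"
  shows "(cmod (cinner u v))\<^sup>2 \<le> sqnorm u * sqnorm v"
proof -
  have "cmod (cinner u v) \<le> (\<Sum>i<dim_vec u. cmod (u $ i) * cmod (v $ i))"
    unfolding cinner_def by (rule order_trans[OF norm_sum]) (simp add: norm_mult)
  then have "(cmod (cinner u v))\<^sup>2 \<le> (\<Sum>i<dim_vec u. cmod (u $ i) * cmod (v $ i))\<^sup>2"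
    by (simp add: power_mono)
  also have "\<dots> \<le> sqnorm u * sqnorm v"
    unfolding sqnorm_def using assms by (simp add: Cauchy_Schwarz_ineq_sum)
  finally show ?thesis .
qed

lemma cinner_unit_le_1:
  assumes "unit_vec_c n u" "unit_vec_c n v"
  shows "(cmod (cinner u v))\<^sup>2 \<le> 1"
  using cinner_Cauchy_Schwarz[of u v] assms by (auto simp: unit_vec_c_iff)

lemma cinner_append:
  assumes "dim_vec u = dim_vec x" "dim_vec v = dim_vec y"
  shows "cinner (u @\<^sub>v v) (x @\<^sub>v y) = cinner u x + cinner v y"
  using assms unfolding cinner_def by (simp add: sum_lessThan_add)

lemma cinner_smult_right: "dim_vec u = dim_vec v \<Longrightarrow> cinner u (c \<cdot>\<^sub>v v) = c * cinner u v"
  unfolding cinner_def by (simp add: sum_distrib_left mult_ac)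

lemma cinner_zero_left [simp]: "cinner (0\<^sub>v n) v = 0"
  unfolding cinner_def by simp

lemma cinner_mult_mat_vec_left:
  assumes "U \<in> carrier_mat n m" "u \<in> carrier_vec m" "v \<in> carrier_vec n"
  shows "cinner (U *\<^sub>v u) v = cinner u (adjoint_mat U *\<^sub>v v)"
proof -
  have "cinner (U *\<^sub>v u) v = (\<Sum>i<n. \<Sum>j<m. cnj (U $$ (i, j)) * cnj (u $ j) * v $ i)"
    using assms unfolding cinner_def
    by (simp add: mult_mat_vec_def scalar_prod_def sum_distrib_right atLeast0LessThan)
  also have "\<dots> = (\<Sum>j<m. \<Sum>i<n. cnj (u $ j) * (cnj (U $$ (i, j)) * v $ i))"
    by (subst sum.swap) (simp add: mult_ac)
  also have "\<dots> = cinner u (adjoint_mat U *\<^sub>v v)"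
    using assms unfolding cinner_def adjoint_mat_def
    by (simp add: mult_mat_vec_def scalar_prod_def sum_distrib_left atLeast0LessThan)
  finally show ?thesis .
qed

lemma sqnorm_unitary_mult:
  assumes "unitary_mat n U" "v \<in> carrier_vec n"
  shows "sqnorm (U *\<^sub>v v) = sqnorm v"
proof -
  have U: "U \<in> carrier_mat n n" and UU: "adjoint_mat U * U = 1\<^sub>m n"
    using assms(1) unfolding unitary_mat_def by auto
  have "adjoint_mat U \<in> carrier_mat n n"
    using U unfolding adjoint_mat_def by auto
  then have "adjoint_mat U *\<^sub>v (U *\<^sub>v v) = v"
    using U UU assms(2) by (simp add: assoc_mult_mat_vec[symmetric])
  then have "cinner (U *\<^sub>v v) (U *\<^sub>v v) = cinner v v"
    using cinner_mult_mat_vec_left[OF U assms(2)] U assms(2) by simp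
  then show ?thesis by (simp add: cinner_self)
qed

lemma qaut_U_carrier:
  "is_qaut A \<Longrightarrow> \<sigma> \<in> qa_alph A \<Longrightarrow> qa_U A \<sigma> \<in> carrier_mat (qa_dim A) (qa_dim A)"
  unfolding is_qaut_def unitary_mat_def by blast

lemma qaut_zero_in_F: "is_qaut A \<Longrightarrow> 0\<^sub>v (qa_dim A) \<in> qa_F A"
  unfolding is_qaut_def csubspace_vec_def by blast

fun run :: "'a qaut \<Rightarrow> (nat \<Rightarrow> 'a) \<Rightarrow> nat \<Rightarrow> complex vec" where
  "run A w 0 = qa_init A"
| "run A w (Suc n) = qa_U A (w n) *\<^sub>v run A w n"

lemma drun_eq_run:
  assumes "strict_mono ns" "n \<le> ns 0"
  shows "drun A w \<psi> ns n = run A w n"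
  using assms(2)
proof (induction n)
  case (Suc n)
  have "n < ns i" for i
    using Suc.prems strict_mono_leD[OF assms(1), of 0 i] by simp
  then have "n \<notin> range ns"
    by (metis less_irrefl rangeE)
  with Suc show ?case by simp
qed simp

lemma run_unit:
  assumes "is_qaut A" "\<forall>i. w i \<in> qa_alph A"
  shows "unit_vec_c (qa_dim A) (run A w n)"
proof (induction n)
  case 0
  then show ?case using assms(1) unfolding is_qaut_def by simp
next
  case (Suc n)
  have "unitary_mat (qa_dim A) (qa_U A (w n))"
    using assms unfolding is_qaut_def by blast
  with Suc show ?case
    using qaut_U_carrier[OF assms(1)] assms(2)
    by (auto simp: unit_vec_c_iff sqnorm_unitary_mult intro!: mult_mat_vec_carrier)
qed

lemma drun_carrier:
  assumes "is_qaut A" "\<forall>i. w i \<in> qa_alph A" "\<psi> \<in> carrier_vec (qa_dim A)"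
  shows "drun A w \<psi> ns n \<in> carrier_vec (qa_dim A)"
  by (induction n)
    (use assms qaut_U_carrier[OF assms(1)] in \<open>auto simp: is_qaut_def unit_vec_c_iff intro!: mult_mat_vec_carrier\<close>)

definition overlap :: "'a qaut \<Rightarrow> (nat \<Rightarrow> 'a) \<Rightarrow> complex vec \<Rightarrow> (nat \<Rightarrow> nat) \<Rightarrow> nat \<Rightarrow> real" where
  "overlap A w \<psi> ns n = (cmod (cinner \<psi> (drun A w \<psi> ns n)))\<^sup>2"

definition fD_candidates :: "'a qaut \<Rightarrow> (nat \<Rightarrow> 'a) \<Rightarrow> real set" where
  "fD_candidates A w = {(INF i. overlap A w \<psi> ns (ns i)) | \<psi> ns.
      \<psi> \<in> qa_F A \<and> unit_vec_c (qa_dim A) \<psi> \<and> strict_mono ns}"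

lemma fD_eq_Sup_candidates: "fD A w = Sup (insert 0 (fD_candidates A w))"
  unfolding fD_def fD_candidates_def overlap_def by simp

lemma overlap_nonneg: "0 \<le> overlap A w \<psi> ns n"
  unfolding overlap_def by simp

lemma INF_overlap_le: "(INF i. overlap A w \<psi> ns (ns i)) \<le> overlap A w \<psi> ns (ns j)"
  by (rule cINF_lower) (auto intro: bdd_belowI[of _ 0] overlap_nonneg)

lemma bdd_above_fD_candidates:
  assumes "\<And>n. unit_vec_c (qa_dim A) (run A w n)"
  shows "bdd_above (fD_candidates A w)"
proof (rule bdd_aboveI)
  fix x assume "x \<in> fD_candidates A w"
  then obtain \<psi> ns where x: "x = (INF i. overlap A w \<psi> ns (ns i))"
    and \<psi>: "unit_vec_c (qa_dim A) \<psi>" and ns: "strict_mono ns"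
    unfolding fD_candidates_def by blast
  have "x \<le> overlap A w \<psi> ns (ns 0)"
    unfolding x by (rule INF_overlap_le)
  also have "\<dots> = (cmod (cinner \<psi> (run A w (ns 0))))\<^sup>2"
    unfolding overlap_def using drun_eq_run[OF ns order_refl, of A w \<psi>] by simp
  also have "\<dots> \<le> 1"
    using cinner_unit_le_1[OF \<psi> assms] .
  finally show "x \<le> 1" .
qed

lemma fD_scaled_le:
  assumes "0 \<le> c" and "bdd_above (fD_candidates B w)"
    and transport: "\<And>\<psi> ns. \<psi> \<in> qa_F A \<Longrightarrow> unit_vec_c (qa_dim A) \<psi> \<Longrightarrow> strict_mono ns \<Longrightarrow>
      \<exists>\<psi>'. \<psi>' \<in> qa_F B \<and> unit_vec_c (qa_dim B) \<psi>' \<and>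
        (\<forall>n. c * overlap A w \<psi> ns n \<le> overlap B w \<psi>' ns n)"
  shows "c * fD A w \<le> fD B w"
  unfolding fD_eq_Sup_candidates
proof (rule scaled_Sup_insert_0_le[OF assms(1,2)])
  fix x assume "x \<in> fD_candidates A w"
  then obtain \<psi> ns where x: "x = (INF i. overlap A w \<psi> ns (ns i))"
    and \<psi>: "\<psi> \<in> qa_F A" "unit_vec_c (qa_dim A) \<psi>" and ns: "strict_mono ns"
    unfolding fD_candidates_def by blast
  obtain \<psi>' where \<psi>': "\<psi>' \<in> qa_F B" "unit_vec_c (qa_dim B) \<psi>'"
    and le: "\<And>n. c * overlap A w \<psi> ns n \<le> overlap B w \<psi>' ns n"
    using transport[OF \<psi> ns] by blast
  have "c * x \<le> (INF i. overlap B w \<psi>' ns (ns i))"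
  proof (rule cINF_greatest)
    fix i
    have "c * x \<le> c * overlap A w \<psi> ns (ns i)"
      unfolding x using INF_overlap_le assms(1) by (rule mult_left_mono)
    then show "c * x \<le> overlap B w \<psi>' ns (ns i)"
      using le order_trans by blast
  qed simp
  moreover have "(INF i. overlap B w \<psi>' ns (ns i)) \<in> fD_candidates B w"
    unfolding fD_candidates_def using \<psi>' ns by blast
  ultimately show "\<exists>y\<in>fD_candidates B w. c * x \<le> y" by blast
qed

lemma wdsum_U_mult_append:
  assumes "is_qaut A" "is_qaut B" "\<sigma> \<in> qa_alph A" "\<sigma> \<in> qa_alph B"
    and "u \<in> carrier_vec (qa_dim A)" "v \<in> carrier_vec (qa_dim B)"
  shows "qa_U (wdsum a A b B) \<sigma> *\<^sub>v (u @\<^sub>v v) = (qa_U A \<sigma> *\<^sub>v u) @\<^sub>v (qa_U B \<sigma> *\<^sub>v v)"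
  unfolding wdsum_def using assms by (simp add: mult_mat_vec_split qaut_U_carrier)

lemma qa_dim_wdsum [simp]: "qa_dim (wdsum a A b B) = qa_dim A + qa_dim B"
  by (simp add: wdsum_def)

lemma run_wdsum:
  assumes "is_qaut A" "is_qaut B" "\<forall>i. w i \<in> qa_alph A" "\<forall>i. w i \<in> qa_alph B"
  shows "run (wdsum a A b B) w n = (a \<cdot>\<^sub>v run A w n) @\<^sub>v (b \<cdot>\<^sub>v run B w n)"
proof (induction n)
  case 0
  then show ?case by (simp add: wdsum_def)
next
  case (Suc n)
  have rA: "run A w n \<in> carrier_vec (qa_dim A)" and rB: "run B w n \<in> carrier_vec (qa_dim B)"
    using run_unit assms unfolding unit_vec_c_iff by blast+
  have "run (wdsum a A b B) w (Suc n)
      = qa_U (wdsum a A b B) (w n) *\<^sub>v ((a \<cdot>\<^sub>v run A w n) @\<^sub>v (b \<cdot>\<^sub>v run B w n))"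
    using Suc by simp
  also have "\<dots> = (qa_U A (w n) *\<^sub>v (a \<cdot>\<^sub>v run A w n)) @\<^sub>v (qa_U B (w n) *\<^sub>v (b \<cdot>\<^sub>v run B w n))"
    by (rule wdsum_U_mult_append) (use assms rA rB in auto)
  also have "\<dots> = (a \<cdot>\<^sub>v run A w (Suc n)) @\<^sub>v (b \<cdot>\<^sub>v run B w (Suc n))"
    using mult_mat_vec[OF qaut_U_carrier[OF assms(1)] rA] mult_mat_vec[OF qaut_U_carrier[OF assms(2)] rB]
      assms(3,4) by simp
  finally show ?case .
qed

lemma run_wdsum_unit:
  assumes "is_qaut A" "is_qaut B" "\<forall>i. w i \<in> qa_alph A" "\<forall>i. w i \<in> qa_alph B"
    and "(cmod a)\<^sup>2 + (cmod b)\<^sup>2 = 1"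
  shows "unit_vec_c (qa_dim (wdsum a A b B)) (run (wdsum a A b B) w n)"
  using run_unit[OF assms(1,3), of n] run_unit[OF assms(2,4), of n] assms(5)
  unfolding run_wdsum[OF assms(1-4)] by (simp add: unit_vec_c_iff sqnorm_append sqnorm_smult)

lemma drun_wdsum:
  assumes "is_qaut A" "is_qaut B" "\<forall>i. w i \<in> qa_alph A" "\<forall>i. w i \<in> qa_alph B"
    and "u \<in> carrier_vec (qa_dim A)" "v \<in> carrier_vec (qa_dim B)" "ns 0 < n"
  shows "drun (wdsum a A b B) w (u @\<^sub>v v) ns n = drun A w u ns n @\<^sub>v drun B w v ns n"
  using assms(7)
proof (induction n)
  case (Suc n)
  have split: "(if n \<in> range ns then u @\<^sub>v v else drun (wdsum a A b B) w (u @\<^sub>v v) ns n)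
    = (if n \<in> range ns then u else drun A w u ns n) @\<^sub>v (if n \<in> range ns then v else drun B w v ns n)"
  proof (cases "n \<in> range ns")
    case False
    then have "ns 0 < n" using Suc.prems by (metis le_less less_Suc_eq_le rangeI)
    then show ?thesis using Suc.IH False by simp
  qed simp
  show ?case
    unfolding drun.simps split
    by (rule wdsum_U_mult_append) (use assms drun_carrier in auto)
qed simp

lemma overlap_wdsum_left:
  assumes "is_qaut A" "is_qaut B" "\<forall>i. w i \<in> qa_alph A" "\<forall>i. w i \<in> qa_alph B"
    and "u \<in> carrier_vec (qa_dim A)" "strict_mono ns"
  shows "overlap (wdsum a A b B) w (u @\<^sub>v 0\<^sub>v (qa_dim B)) ns n
    = (if n \<le> ns 0 then (cmod a)\<^sup>2 else 1) * overlap A w u ns n"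
proof (cases "n \<le> ns 0")
  case True
  have "run A w n \<in> carrier_vec (qa_dim A)" "run B w n \<in> carrier_vec (qa_dim B)"
    using run_unit assms unfolding unit_vec_c_iff by blast+
  then have "cinner (u @\<^sub>v 0\<^sub>v (qa_dim B)) (drun (wdsum a A b B) w (u @\<^sub>v 0\<^sub>v (qa_dim B)) ns n)
      = a * cinner u (drun A w u ns n)"
    using assms(5) drun_eq_run[OF assms(6) True, of A w u]
      drun_eq_run[OF assms(6) True, of "wdsum a A b B" w]
    by (simp add: run_wdsum[OF assms(1-4)] cinner_append cinner_smult_right)
  then show ?thesis
    using True by (simp add: overlap_def norm_mult power_mult_distrib)
next
  case False
  have "drun A w u ns n \<in> carrier_vec (qa_dim A)"
    "drun B w (0\<^sub>v (qa_dim B)) ns n \<in> carrier_vec (qa_dim B)"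
    using drun_carrier[OF assms(1,3,5)] drun_carrier[OF assms(2,4) zero_carrier_vec] by auto
  then have "cinner (u @\<^sub>v 0\<^sub>v (qa_dim B)) (drun (wdsum a A b B) w (u @\<^sub>v 0\<^sub>v (qa_dim B)) ns n)
      = cinner u (drun A w u ns n)"
    using assms(5) False
    by (simp add: drun_wdsum[OF assms(1-5)] cinner_append)
  then show ?thesis
    using False by (simp add: overlap_def)
qed

lemma overlap_wdsum_right:
  assumes "is_qaut A" "is_qaut B" "\<forall>i. w i \<in> qa_alph A" "\<forall>i. w i \<in> qa_alph B"
    and "v \<in> carrier_vec (qa_dim B)" "strict_mono ns"
  shows "overlap (wdsum a A b B) w (0\<^sub>v (qa_dim A) @\<^sub>v v) ns n
    = (if n \<le> ns 0 then (cmod b)\<^sup>2 else 1) * overlap B w v ns n"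
proof (cases "n \<le> ns 0")
  case True
  have "run A w n \<in> carrier_vec (qa_dim A)" "run B w n \<in> carrier_vec (qa_dim B)"
    using run_unit assms unfolding unit_vec_c_iff by blast+
  then have "cinner (0\<^sub>v (qa_dim A) @\<^sub>v v) (drun (wdsum a A b B) w (0\<^sub>v (qa_dim A) @\<^sub>v v) ns n)
      = b * cinner v (drun B w v ns n)"
    using assms(5) drun_eq_run[OF assms(6) True, of B w v]
      drun_eq_run[OF assms(6) True, of "wdsum a A b B" w]
    by (simp add: run_wdsum[OF assms(1-4)] cinner_append cinner_smult_right)
  then show ?thesis
    using True by (simp add: overlap_def norm_mult power_mult_distrib)
next
  case False
  have "drun A w (0\<^sub>v (qa_dim A)) ns n \<in> carrier_vec (qa_dim A)"
    "drun B w v ns n \<in> carrier_vec (qa_dim B)"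
    using drun_carrier[OF assms(1,3) zero_carrier_vec] drun_carrier[OF assms(2,4,5)] by auto
  then have "cinner (0\<^sub>v (qa_dim A) @\<^sub>v v) (drun (wdsum a A b B) w (0\<^sub>v (qa_dim A) @\<^sub>v v) ns n)
      = cinner v (drun B w v ns n)"
    using assms(5) False
    by (simp add: drun_wdsum[OF assms(1-4) _ assms(5)] cinner_append)
  then show ?thesis
    using False by (simp add: overlap_def)
qed

lemma fD_wdsum_ge_left:
  assumes "is_qaut A" "is_qaut B" "\<forall>i. w i \<in> qa_alph A" "\<forall>i. w i \<in> qa_alph B"
    and "(cmod a)\<^sup>2 + (cmod b)\<^sup>2 = 1"
  shows "(cmod a)\<^sup>2 * fD A w \<le> fD (wdsum a A b B) w"
proof (rule fD_scaled_le)
  show "bdd_above (fD_candidates (wdsum a A b B) w)"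
    by (rule bdd_above_fD_candidates) (rule run_wdsum_unit[OF assms])
  have a: "(cmod a)\<^sup>2 \<le> 1"
    using assms(5) zero_le_power2[of "cmod b"] by linarith
  fix \<psi> and ns :: "nat \<Rightarrow> nat"
  assume \<psi>: "\<psi> \<in> qa_F A" "unit_vec_c (qa_dim A) \<psi>" and ns: "strict_mono ns"
  have "\<psi> @\<^sub>v 0\<^sub>v (qa_dim B) \<in> qa_F (wdsum a A b B)"
    using \<psi>(1) qaut_zero_in_F[OF assms(2)] by (auto simp: wdsum_def)
  moreover have "unit_vec_c (qa_dim (wdsum a A b B)) (\<psi> @\<^sub>v 0\<^sub>v (qa_dim B))"
    using \<psi>(2) by (simp add: unit_vec_c_iff sqnorm_append)
  moreover have "(cmod a)\<^sup>2 * overlap A w \<psi> ns n \<le> overlap (wdsum a A b B) w (\<psi> @\<^sub>v 0\<^sub>v (qa_dim B)) ns n"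
    for n
    using overlap_wdsum_left[OF assms(1-4) _ ns, of \<psi> a b n] \<psi>(2) a overlap_nonneg[of A w \<psi> ns n]
    by (simp add: unit_vec_c_iff mult_left_le_one_le)
  ultimately show "\<exists>\<psi>'. \<psi>' \<in> qa_F (wdsum a A b B) \<and> unit_vec_c (qa_dim (wdsum a A b B)) \<psi>' \<and>
      (\<forall>n. (cmod a)\<^sup>2 * overlap A w \<psi> ns n \<le> overlap (wdsum a A b B) w \<psi>' ns n)"
    by blast
qed simp

lemma fD_wdsum_ge_right:
  assumes "is_qaut A" "is_qaut B" "\<forall>i. w i \<in> qa_alph A" "\<forall>i. w i \<in> qa_alph B"
    and "(cmod a)\<^sup>2 + (cmod b)\<^sup>2 = 1"
  shows "(cmod b)\<^sup>2 * fD B w \<le> fD (wdsum a A b B) w"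
proof (rule fD_scaled_le)
  show "bdd_above (fD_candidates (wdsum a A b B) w)"
    by (rule bdd_above_fD_candidates) (rule run_wdsum_unit[OF assms])
  have b: "(cmod b)\<^sup>2 \<le> 1"
    using assms(5) zero_le_power2[of "cmod a"] by linarith
  fix \<psi> and ns :: "nat \<Rightarrow> nat"
  assume \<psi>: "\<psi> \<in> qa_F B" "unit_vec_c (qa_dim B) \<psi>" and ns: "strict_mono ns"
  have "0\<^sub>v (qa_dim A) @\<^sub>v \<psi> \<in> qa_F (wdsum a A b B)"
    using \<psi>(1) qaut_zero_in_F[OF assms(1)] by (auto simp: wdsum_def)
  moreover have "unit_vec_c (qa_dim (wdsum a A b B)) (0\<^sub>v (qa_dim A) @\<^sub>v \<psi>)"
    using \<psi>(2) by (simp add: unit_vec_c_iff sqnorm_append)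
  moreover have "(cmod b)\<^sup>2 * overlap B w \<psi> ns n \<le> overlap (wdsum a A b B) w (0\<^sub>v (qa_dim A) @\<^sub>v \<psi>) ns n"
    for n
    using overlap_wdsum_right[OF assms(1-4) _ ns, of \<psi> a b n] \<psi>(2) b overlap_nonneg[of B w \<psi> ns n]
    by (simp add: unit_vec_c_iff mult_left_le_one_le)
  ultimately show "\<exists>\<psi>'. \<psi>' \<in> qa_F (wdsum a A b B) \<and> unit_vec_c (qa_dim (wdsum a A b B)) \<psi>' \<and>
      (\<forall>n. (cmod b)\<^sup>2 * overlap B w \<psi> ns n \<le> overlap (wdsum a A b B) w \<psi>' ns n)"
    by blast
qed simp

lemma drun_trivial_dynamics:
  assumes "\<And>\<sigma>. qa_U A \<sigma> = 1\<^sub>m (qa_dim A)" "qa_init A \<in> carrier_vec (qa_dim A)"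
    and "\<psi> \<in> carrier_vec (qa_dim A)" "strict_mono ns"
  shows "drun A w \<psi> ns n = (if n \<le> ns 0 then qa_init A else \<psi>)"
proof (induction n)
  case (Suc n)
  show ?case
  proof (cases "n \<in> range ns")
    case True
    then have "ns 0 \<le> n" using strict_mono_leD[OF assms(4)] by auto
    with True show ?thesis using assms(1,3) by simp
  next
    case False
    then have "n \<noteq> ns 0" by auto
    with Suc False show ?thesis using assms(1-3) by auto
  qed
qed simp

definition const_qaut :: "'a set \<Rightarrow> real \<Rightarrow> 'a qaut" where
  "const_qaut \<Sigma> lam = \<lparr>qa_dim = 2,
     qa_init = vec 2 (\<lambda>i. complex_of_real (if i = 0 then sqrt lam else sqrt (1 - lam))),
     qa_alph = \<Sigma>, qa_U = (\<lambda>_. 1\<^sub>m 2), qa_F = {c \<cdot>\<^sub>v unit_vec 2 0 | c. True}\<rparr>"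

lemma is_qaut_const_qaut:
  assumes "finite \<Sigma>" "0 \<le> lam" "lam \<le> 1"
  shows "is_qaut (const_qaut \<Sigma> lam)"
proof -
  have "adjoint_mat (1\<^sub>m 2) = (1\<^sub>m 2 :: complex mat)"
    by (rule eq_matI) (auto simp: adjoint_mat_def)
  then have "unitary_mat 2 (1\<^sub>m 2)"
    unfolding unitary_mat_def by simp
  moreover have "unit_vec_c 2 (qa_init (const_qaut \<Sigma> lam))"
    using assms unfolding unit_vec_c_def const_qaut_def by (simp add: numeral_2_eq_2)
  moreover have "csubspace_vec 2 {c \<cdot>\<^sub>v unit_vec 2 0 | c. True}"
    unfolding csubspace_vec_def
  proof (intro conjI ballI allI)
    fix u v :: "complex vec"
    assume "u \<in> {c \<cdot>\<^sub>v unit_vec 2 0 | c. True}" "v \<in> {c \<cdot>\<^sub>v unit_vec 2 0 | c. True}"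
    then obtain c d where "u = c \<cdot>\<^sub>v unit_vec 2 0" "v = d \<cdot>\<^sub>v unit_vec 2 0" by blast
    then show "u + v \<in> {c \<cdot>\<^sub>v unit_vec 2 0 | c. True}"
      by (auto intro!: exI[of _ "c + d"] simp: add_smult_distrib_vec)
  next
    fix c :: complex and u :: "complex vec"
    assume "u \<in> {c \<cdot>\<^sub>v unit_vec 2 0 | c. True}"
    then obtain d where "u = d \<cdot>\<^sub>v unit_vec 2 0" by blast
    then show "c \<cdot>\<^sub>v u \<in> {c \<cdot>\<^sub>v unit_vec 2 0 | c. True}"
      by (auto intro!: exI[of _ "c * d"] simp: smult_smult_assoc)
  qed (auto intro!: exI[of _ 0])
  ultimately show ?thesis
    using assms(1) unfolding is_qaut_def by (simp add: const_qaut_def)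
qed

lemma overlap_const_qaut:
  assumes "0 \<le> lam" "lam \<le> 1" "strict_mono ns"
    and "\<psi> \<in> qa_F (const_qaut \<Sigma> lam)" "unit_vec_c 2 \<psi>"
  shows "overlap (const_qaut \<Sigma> lam) w \<psi> ns (ns i) = (if i = 0 then lam else 1)"
proof -
  obtain c where c: "\<psi> = c \<cdot>\<^sub>v unit_vec 2 0"
    using assms(4) by (auto simp: const_qaut_def)
  have "sqnorm \<psi> = 1" "\<psi> \<in> carrier_vec 2"
    using assms(5) by (auto simp: unit_vec_c_iff)
  then have "(cmod c)\<^sup>2 = 1"
    unfolding c sqnorm_smult by (simp add: sqnorm_def numeral_2_eq_2)
  then have "cmod c = 1"
    using norm_ge_zero[of c] by (simp add: power2_eq_1_iff)
  have "drun (const_qaut \<Sigma> lam) w \<psi> ns (ns i)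
      = (if ns i \<le> ns 0 then qa_init (const_qaut \<Sigma> lam) else \<psi>)"
    by (rule drun_trivial_dynamics) (use \<open>\<psi> \<in> carrier_vec 2\<close> assms(3) in \<open>simp_all add: const_qaut_def\<close>)
  then have drun: "drun (const_qaut \<Sigma> lam) w \<psi> ns (ns i)
      = (if i = 0 then qa_init (const_qaut \<Sigma> lam) else \<psi>)"
    using strict_mono_less_eq[OF assms(3), of i 0] by simp
  show ?thesis
  proof (cases "i = 0")
    case True
    have "cinner \<psi> (qa_init (const_qaut \<Sigma> lam)) = cnj c * complex_of_real (sqrt lam)"
      unfolding c by (simp add: cinner_def const_qaut_def numeral_2_eq_2)
    then show ?thesis
      using True drun \<open>cmod c = 1\<close> assms(1) by (simp add: overlap_def norm_mult)
  next
    case False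
    then show ?thesis
      using drun \<open>sqnorm \<psi> = 1\<close> by (simp add: overlap_def cinner_self)
  qed
qed

lemma fD_const_qaut:
  assumes "0 \<le> lam" "lam \<le> 1"
  shows "fD (const_qaut \<Sigma> lam) w = lam"
proof -
  have INF: "(INF i. if i = (0::nat) then lam else 1) = lam"
    using assms(2) by (intro cInf_eq_minimum) auto
  have "fD_candidates (const_qaut \<Sigma> lam) w = {lam}"
  proof
    show "fD_candidates (const_qaut \<Sigma> lam) w \<subseteq> {lam}"
    proof
      fix x assume "x \<in> fD_candidates (const_qaut \<Sigma> lam) w"
      then obtain \<psi> ns where "x = (INF i. overlap (const_qaut \<Sigma> lam) w \<psi> ns (ns i))"
        and "\<psi> \<in> qa_F (const_qaut \<Sigma> lam)" "unit_vec_c 2 \<psi>" "strict_mono ns"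
        by (auto simp: fD_candidates_def const_qaut_def)
      then show "x \<in> {lam}"
        using overlap_const_qaut[OF assms, where \<Sigma> = \<Sigma> and w = w] INF by simp
    qed
    have "unit_vec 2 0 \<in> qa_F (const_qaut \<Sigma> lam)"
      by (auto simp: const_qaut_def intro!: exI[of _ 1])
    moreover have "unit_vec_c 2 (unit_vec 2 0)"
      by (simp add: unit_vec_c_iff sqnorm_def numeral_2_eq_2)
    moreover have "strict_mono (id :: nat \<Rightarrow> nat)"
      by (simp add: strict_mono_def)
    moreover have "(INF i. overlap (const_qaut \<Sigma> lam) w (unit_vec 2 0) id (id i)) = lam"
      using overlap_const_qaut[OF assms \<open>strict_mono id\<close> calculation(1,2), where w = w] INF
      by simp
    ultimately show "{lam} \<subseteq> fD_candidates (const_qaut \<Sigma> lam) w"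
      unfolding fD_candidates_def by (force simp: const_qaut_def)
  qed
  moreover have "Sup {0, lam} = lam"
    using assms(1) by (intro cSup_eq_maximum) auto
  ultimately show ?thesis
    by (simp add: fD_eq_Sup_candidates)
qed

theorem proposition5:
  shows "(\<forall>(\<Sigma>::'a set) (lam::real). finite \<Sigma> \<and> 0 \<le> lam \<and> lam \<le> 1 \<longrightarrow>
            (\<exists>A::'a qaut. is_qaut A \<and> qa_alph A = \<Sigma> \<and>
               (\<forall>w. (\<forall>i. w i \<in> \<Sigma>) \<longrightarrow> fD A w = lam)))
       \<and> (\<forall>(A::'a qaut) B a b w. is_qaut A \<and> is_qaut B \<and> qa_alph A = qa_alph B \<and>
            (cmod a)\<^sup>2 + (cmod b)\<^sup>2 = 1 \<and> (\<forall>i. w i \<in> qa_alph A) \<longrightarrow>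
            fD (wdsum a A b B) w \<ge> max ((cmod a)\<^sup>2 * fD A w) ((cmod b)\<^sup>2 * fD B w))"
proof (intro conjI allI impI)
  fix \<Sigma> :: "'a set" and lam :: real
  assume "finite \<Sigma> \<and> 0 \<le> lam \<and> lam \<le> 1"
  then show "\<exists>A::'a qaut. is_qaut A \<and> qa_alph A = \<Sigma> \<and> (\<forall>w. (\<forall>i. w i \<in> \<Sigma>) \<longrightarrow> fD A w = lam)"
    by (intro exI[of _ "const_qaut \<Sigma> lam"] conjI allI impI is_qaut_const_qaut fD_const_qaut)
      (auto simp: const_qaut_def)
next
  fix A B :: "'a qaut" and a b :: complex and w :: "nat \<Rightarrow> 'a"
  assume "is_qaut A \<and> is_qaut B \<and> qa_alph A = qa_alph B \<and>
    (cmod a)\<^sup>2 + (cmod b)\<^sup>2 = 1 \<and> (\<forall>i. w i \<in> qa_alph A)"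
  then have hyps: "is_qaut A" "is_qaut B" "\<forall>i. w i \<in> qa_alph A" "\<forall>i. w i \<in> qa_alph B"
    "(cmod a)\<^sup>2 + (cmod b)\<^sup>2 = 1"
    by auto
  show "fD (wdsum a A b B) w \<ge> max ((cmod a)\<^sup>2 * fD A w) ((cmod b)\<^sup>2 * fD B w)"
    using fD_wdsum_ge_left[OF hyps] fD_wdsum_ge_right[OF hyps] by simp
qed

end
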